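(* Let $f_0\in\mathbb{R}$, $g\in\mathbb{R}^n$, $H$ a symmetric $n\times n$ matrix, $\sigma>0$, and $m(s)=f_0+\langle g,s\rangle+\frac12\langle Hs,s\rangle+\frac16\sigma\|s\|^3$. Let $s_k\in\mathbb{R}^n$ with $m(s_k)\le m(0)$, set $g_k=g+Hs_k$, and assume $\|g_k\|_{r,1}<\frac12\sigma\|s_k\|^2$. Let $\alpha_k^R$ be a minimizer of $\alpha\mapsto m(s_k-\alpha s_k)$ over $\alpha\ge0$ and $s_k^R=(1-\alpha_k^R)s_k$. Then $$m(s_k)-m(s_k^R)\ge\frac12\min\left[\frac{\big|\|g_k\|_{r,1}-\frac12\sigma\|s_k\|^2\big|^2}{1+\frac32(\|H\|_{r,2}+\sigma\|s_k\|)},\ \frac{\big|\|g_k\|_{r,1}-\frac12\sigma\|s_k\|^2\big|^{3/2}}{3\sqrt\sigma}\right].$$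
   Context: $\|\cdot\|$ is an arbitrary (possibly non-smooth) norm on $\mathbb{R}^n$, $\langle\cdot,\cdot\rangle$ the Euclidean inner product, $\|v\|_{r,1}=\max_{\|s\|=1}|\langle v,s\rangle|$ the dual norm, and for a symmetric matrix $H$, $\|H\|_{r,2}=\max_{\|v\|=1}|\langle Hv,v\rangle|$. *)

theory Defs
  imports "HOL-Analysis.Analysis"
begin

definition is_norm :: "(real^'n \<Rightarrow> real) \<Rightarrow> bool" where
  "is_norm N \<longleftrightarrow> (\<forall>x. 0 \<le> N x) \<and> (\<forall>x. N x = 0 \<longleftrightarrow> x = 0)
     \<and> (\<forall>c x. N (c *\<^sub>R x) = \<bar>c\<bar> * N x) \<and> (\<forall>x y. N (x + y) \<le> N x + N y)"

definition dual_norm :: "(real^'n \<Rightarrow> real) \<Rightarrow> real^'n \<Rightarrow> real" where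
  "dual_norm N v = Sup {\<bar>v \<bullet> s\<bar> | s. N s = 1}"

definition mat_norm :: "(real^'n \<Rightarrow> real) \<Rightarrow> real^'n^'n \<Rightarrow> real" where
  "mat_norm N H = Sup {\<bar>(H *v v) \<bullet> v\<bar> | v. N v = 1}"

definition cubic_model :: "(real^'n \<Rightarrow> real) \<Rightarrow> real \<Rightarrow> real^'n \<Rightarrow> real^'n^'n \<Rightarrow> real \<Rightarrow> real^'n \<Rightarrow> real" where
  "cubic_model N f0 g H \<sigma> s = f0 + g \<bullet> s + (1/2) * ((H *v s) \<bullet> s) + (1/6) * \<sigma> * (N s)^3"

end

theory Submission
  imports Defs
begin

text \<open>Along the ray \<open>t *\<^sub>R sk\<close> the model is a cubic in \<open>t\<close>. Since
  \<open>\<bar>\<langle>gk, sk\<rangle>\<bar> \<le> \<parallel>gk\<parallel>\<^sub>r\<^sub>,\<^sub>1 \<parallel>sk\<parallel>\<close>, the linear coefficient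
  \<open>c = \<langle>gk, sk\<rangle> + \<sigma>\<parallel>sk\<parallel>\<^sup>3/2\<close> of \<open>\<beta> \<mapsto> m sk - m ((1 - \<beta>) sk)\<close> is at least
  \<open>\<parallel>sk\<parallel>\<close> times the gap \<open>\<delta> = \<sigma>\<parallel>sk\<parallel>\<^sup>2/2 - \<parallel>gk\<parallel>\<^sub>r\<^sub>,\<^sub>1 > 0\<close>, the quadratic
  coefficient is at most \<open>L/2\<close> with \<open>L = \<parallel>sk\<parallel>\<^sup>2 (\<parallel>H\<parallel>\<^sub>r\<^sub>,\<^sub>2 + \<sigma>\<parallel>sk\<parallel>)\<close>, and the cubic
  coefficient is nonnegative. The step \<open>\<beta> = min 1 (c/L)\<close> therefore decreases the model by at
  least \<open>min (c\<^sup>2/2L) (c/2)\<close>, which dominates both terms of the claimed bound, and the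
  exact line minimiser does at least as well.\<close>

lemma is_norm_nonneg: "is_norm N \<Longrightarrow> 0 \<le> N x"
  unfolding is_norm_def by blast

lemma is_norm_eq_0_iff: "is_norm N \<Longrightarrow> N x = 0 \<longleftrightarrow> x = 0"
  unfolding is_norm_def by blast

lemma is_norm_scaleR: "is_norm N \<Longrightarrow> N (c *\<^sub>R x) = \<bar>c\<bar> * N x"
  unfolding is_norm_def by blast

lemma is_norm_triangle: "is_norm N \<Longrightarrow> N (x + y) \<le> N x + N y"
  unfolding is_norm_def by blast

lemma is_norm_convex_on:
  fixes N :: "real^'n \<Rightarrow> real"
  shows "is_norm N \<Longrightarrow> convex_on UNIV N"
proof (rule convex_onI)
  fix t :: real and x y :: "real^'n"
  assume "is_norm N" "0 < t" "t < 1"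
  then show "N ((1 - t) *\<^sub>R x + t *\<^sub>R y) \<le> (1 - t) * N x + t * N y"
    using is_norm_triangle[of N "(1 - t) *\<^sub>R x" "t *\<^sub>R y"] by (simp add: is_norm_scaleR)
qed simp

lemma is_norm_continuous_on:
  fixes N :: "real^'n \<Rightarrow> real"
  shows "is_norm N \<Longrightarrow> continuous_on UNIV N"
  by (simp add: convex_on_continuous is_norm_convex_on)

lemma is_norm_ge_norm:
  fixes N :: "real^'n \<Rightarrow> real"
  assumes hN: "is_norm N"
  obtains c where "c > 0" "\<And>x. c * norm x \<le> N x"
proof -
  have ne: "sphere (0::real^'n) 1 \<noteq> {}"
    using norm_axis_1 by (metis dist_0_norm empty_iff mem_sphere)
  obtain x0 where x0: "x0 \<in> sphere 0 1" "\<And>y. y \<in> sphere 0 1 \<Longrightarrow> N x0 \<le> N y"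
    using continuous_attains_inf[OF compact_sphere ne]
      continuous_on_subset[OF is_norm_continuous_on[OF hN]] by blast
  then have "N x0 > 0"
    using hN by (auto simp: is_norm_eq_0_iff less_le is_norm_nonneg)
  moreover have "N x0 * norm x \<le> N x" for x
  proof (cases "x = 0")
    case False
    then have "N x0 \<le> N (inverse (norm x) *\<^sub>R x)" by (intro x0(2)) simp
    then show ?thesis using False hN by (simp add: is_norm_scaleR field_simps)
  qed (simp add: hN is_norm_nonneg)
  ultimately show ?thesis using that by blast
qed

lemma compact_is_norm_sphere:
  fixes N :: "real^'n \<Rightarrow> real"
  assumes hN: "is_norm N"
  shows "compact {s. N s = 1}"
proof -
  obtain c where c: "c > 0" "\<And>x. c * norm x \<le> N x" using is_norm_ge_norm[OF hN] by blast
  have "norm s \<le> 1 / c" if "N s = 1" for s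
    using c(2)[of s] c(1) that by (simp add: field_simps)
  then have "bounded {s. N s = 1}" by (auto simp: bounded_iff)
  moreover have "closed {s. N s = 1}"
    by (intro closed_Collect_eq is_norm_continuous_on[OF hN] continuous_on_const)
  ultimately show ?thesis by (simp add: compact_eq_bounded_closed)
qed

lemma bdd_above_abs_is_norm_sphere:
  fixes N :: "real^'n \<Rightarrow> real" and f :: "real^'n \<Rightarrow> real"
  assumes "is_norm N" "continuous_on UNIV f"
  shows "bdd_above {\<bar>f s\<bar> | s. N s = 1}"
  unfolding setcompr_eq_image
  by (intro bounded_imp_bdd_above compact_imp_bounded compact_continuous_image
      compact_is_norm_sphere assms continuous_intros continuous_on_subset[OF assms(2)]) simp

lemma abs_inner_le_dual_norm:
  fixes N :: "real^'n \<Rightarrow> real"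
  assumes hN: "is_norm N"
  shows "\<bar>v \<bullet> s\<bar> \<le> dual_norm N v * N s"
proof (cases "s = 0")
  case False
  then have Ns: "N s > 0" using hN by (simp add: is_norm_eq_0_iff is_norm_nonneg less_le)
  define u where "u = inverse (N s) *\<^sub>R s"
  have "N u = 1" using Ns hN by (simp add: u_def is_norm_scaleR)
  then have "\<bar>v \<bullet> u\<bar> \<le> dual_norm N v"
    unfolding dual_norm_def
    by (intro cSup_upper bdd_above_abs_is_norm_sphere hN continuous_intros) blast
  then show ?thesis using Ns by (simp add: u_def abs_mult field_simps)
qed (use is_norm_eq_0_iff[OF hN, of 0] in simp)

lemma abs_quadratic_form_le_mat_norm:
  fixes N :: "real^'n \<Rightarrow> real"
  assumes hN: "is_norm N"
  shows "\<bar>(H *v s) \<bullet> s\<bar> \<le> mat_norm N H * (N s)^2"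
proof (cases "s = 0")
  case False
  then have Ns: "N s > 0" using hN by (simp add: is_norm_eq_0_iff is_norm_nonneg less_le)
  define u where "u = inverse (N s) *\<^sub>R s"
  have "N u = 1" using Ns hN by (simp add: u_def is_norm_scaleR)
  then have "\<bar>(H *v u) \<bullet> u\<bar> \<le> mat_norm N H"
    unfolding mat_norm_def
    by (intro cSup_upper bdd_above_abs_is_norm_sphere hN continuous_intros) blast
  then show ?thesis
    using Ns by (simp add: u_def abs_mult matrix_vector_mult_scaleR power2_eq_square field_simps)
qed (use is_norm_eq_0_iff[OF hN, of 0] in simp)

lemma dual_norm_nonneg:
  fixes N :: "real^'n \<Rightarrow> real"
  assumes hN: "is_norm N"
  shows "0 \<le> dual_norm N v"
proof -
  obtain e :: "real^'n" where "e \<noteq> 0" by (metis axis_eq_0_iff zero_neq_one)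
  then have "0 < N e" using hN by (simp add: is_norm_eq_0_iff is_norm_nonneg less_le)
  moreover have "0 \<le> dual_norm N v * N e"
    using abs_inner_le_dual_norm[OF hN, of v e] by linarith
  ultimately show ?thesis by (simp add: zero_le_mult_iff)
qed

lemma mat_norm_nonneg:
  fixes N :: "real^'n \<Rightarrow> real"
  assumes hN: "is_norm N"
  shows "0 \<le> mat_norm N H"
proof -
  obtain e :: "real^'n" where "e \<noteq> 0" by (metis axis_eq_0_iff zero_neq_one)
  then have "0 < N e" using hN by (simp add: is_norm_eq_0_iff is_norm_nonneg less_le)
  moreover have "0 \<le> mat_norm N H * (N e)^2"
    using abs_quadratic_form_le_mat_norm[OF hN, of H e] by linarith
  ultimately show ?thesis by (simp add: zero_le_mult_iff)
qed

lemma cubic_model_scaleR: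
  assumes "is_norm N" "0 \<le> t"
  shows "cubic_model N f0 g H \<sigma> (t *\<^sub>R s)
    = f0 + t * (g \<bullet> s) + t^2 / 2 * ((H *v s) \<bullet> s) + \<sigma> / 6 * t^3 * (N s)^3"
  using assms
  by (simp add: cubic_model_def is_norm_scaleR matrix_vector_mult_scaleR power2_eq_square
      power3_eq_cube algebra_simps)

lemma cubic_model_ray_decrease:
  assumes hN: "is_norm N" and "0 \<le> \<sigma>" "0 \<le> \<beta>" "\<beta> \<le> 1"
    and hM: "(H *v s) \<bullet> s \<le> M * (N s)^2"
  shows "\<beta> * ((g + H *v s) \<bullet> s + \<sigma> / 2 * (N s)^3) - \<beta>^2 / 2 * ((N s)^2 * (M + \<sigma> * N s))
    \<le> cubic_model N f0 g H \<sigma> s - cubic_model N f0 g H \<sigma> ((1 - \<beta>) *\<^sub>R s)"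
proof -
  define a b r where "a = g \<bullet> s" and "b = (H *v s) \<bullet> s" and "r = N s"
  have "cubic_model N f0 g H \<sigma> s = f0 + a + b / 2 + \<sigma> / 6 * r^3"
    using cubic_model_scaleR[OF hN, of 1] by (simp add: a_def b_def r_def)
  moreover have "cubic_model N f0 g H \<sigma> ((1 - \<beta>) *\<^sub>R s)
      = f0 + (1 - \<beta>) * a + (1 - \<beta>)^2 / 2 * b + \<sigma> / 6 * (1 - \<beta>)^3 * r^3"
    using cubic_model_scaleR[OF hN, of "1 - \<beta>"] assms by (simp add: a_def b_def r_def)
  ultimately have "cubic_model N f0 g H \<sigma> s - cubic_model N f0 g H \<sigma> ((1 - \<beta>) *\<^sub>R s)
      = \<beta> * (a + b + \<sigma> / 2 * r^3) - \<beta>^2 / 2 * (b + \<sigma> * r^3) + \<sigma> / 6 * \<beta>^3 * r^3"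
    by (simp add: field_simps power2_eq_square power3_eq_cube)
  moreover have "\<beta>^2 / 2 * (b + \<sigma> * r^3) \<le> \<beta>^2 / 2 * (r^2 * (M + \<sigma> * r))"
    using hM by (intro mult_left_mono) (simp_all add: b_def r_def power2_eq_square power3_eq_cube algebra_simps)
  moreover have "0 \<le> \<sigma> / 6 * \<beta>^3 * r^3" using assms by (simp add: r_def is_norm_nonneg)
  moreover have "(g + H *v s) \<bullet> s = a + b" by (simp add: a_def b_def inner_add_left)
  ultimately show ?thesis by (simp add: r_def)
qed

lemma exists_step_quadratic_decrease:
  fixes c L :: real
  assumes "0 \<le> c" "0 < L"
  shows "\<exists>\<beta>. 0 \<le> \<beta> \<and> \<beta> \<le> 1 \<and> min (c^2 / (2 * L)) (c / 2) \<le> \<beta> * c - \<beta>^2 / 2 * L"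
proof (cases "c \<le> L")
  case True
  have "(c / L) * c - (c / L)^2 / 2 * L = c^2 / (2 * L)"
    using assms by (simp add: field_simps power2_eq_square)
  moreover have "0 \<le> c / L" "c / L \<le> 1" using True assms by auto
  ultimately show ?thesis by (metis min.cobounded1)
next
  case False
  then show ?thesis by (intro exI[of _ 1]) auto
qed

lemma powr_three_halves_le:
  fixes \<delta> \<sigma> r :: real
  assumes "0 < \<delta>" "0 < \<sigma>" "0 < r" "\<delta> \<le> \<sigma> * r^2"
  shows "\<delta> powr (3/2) \<le> sqrt \<sigma> * r * \<delta>"
proof -
  have "\<delta> powr (3/2) = \<delta> * sqrt \<delta>"
    using assms powr_add[of \<delta> 1 "1/2"] by (simp add: powr_half_sqrt)
  also have "sqrt \<delta> \<le> sqrt (\<sigma> * r^2)" using assms(4) by (rule real_sqrt_le_mono)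
  then have "\<delta> * sqrt \<delta> \<le> \<delta> * (sqrt \<sigma> * r)"
    using assms by (simp add: real_sqrt_mult)
  finally show ?thesis by (simp add: mult_ac)
qed

lemma min_step_bound_ge_gap_bound:
  fixes r \<sigma> M \<delta> c :: real
  assumes "0 < r" "0 < \<sigma>" "0 \<le> M" "0 < \<delta>" "\<delta> \<le> \<sigma> * r^2" "r * \<delta> \<le> c"
  shows "(1/2) * min (\<delta>^2 / (1 + (3/2) * (M + \<sigma> * r))) (\<delta> powr (3/2) / (3 * sqrt \<sigma>))
    \<le> min (c^2 / (2 * (r^2 * (M + \<sigma> * r)))) (c / 2)"
proof -
  define X where "X = M + \<sigma> * r"
  have X: "0 < X" using assms by (simp add: X_def add_nonneg_pos)
  have "(1/2) * (\<delta>^2 / (1 + (3/2) * X)) = \<delta>^2 / (2 + 3 * X)" by (simp add: field_simps)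
  also have "\<dots> \<le> \<delta>^2 / (2 * X)" using X by (intro frac_le) auto
  also have "\<dots> = (r * \<delta>)^2 / (2 * (r^2 * X))" using assms(1) by (simp add: power_mult_distrib)
  also have "\<dots> \<le> c^2 / (2 * (r^2 * X))"
    using assms X by (intro divide_right_mono power_mono) auto
  finally have quadratic: "(1/2) * (\<delta>^2 / (1 + (3/2) * X)) \<le> c^2 / (2 * (r^2 * X))" .
  have "\<delta> powr (3/2) / (3 * sqrt \<sigma>) \<le> sqrt \<sigma> * r * \<delta> / (3 * sqrt \<sigma>)"
    using assms powr_three_halves_le[of \<delta> \<sigma> r] by (intro divide_right_mono) auto
  also have "\<dots> = r * \<delta> / 3" using assms(2) by simp
  also have "\<dots> \<le> c" using assms mult_pos_pos[OF assms(1,4)] by linarith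
  finally have cubic: "(1/2) * (\<delta> powr (3/2) / (3 * sqrt \<sigma>)) \<le> c / 2" by simp
  show ?thesis
    using min.mono[OF quadratic cubic] by (simp add: X_def min_mult_distrib_left)
qed

theorem lemma5p3:
  fixes N :: "real^'n \<Rightarrow> real" and f0 :: real and g :: "real^'n" and H :: "real^'n^'n"
    and \<sigma> :: real and sk :: "real^'n" and \<alpha> :: real
  defines "m \<equiv> cubic_model N f0 g H \<sigma>"
  defines "gk \<equiv> g + H *v sk"
  assumes hN: "is_norm N"
    and hH: "transpose H = H"
    and h\<sigma>: "\<sigma> > 0"
    and hdec: "m sk \<le> m 0"
    and hg: "dual_norm N gk < (1/2) * \<sigma> * (N sk)^2"
    and h\<alpha>: "\<alpha> \<ge> 0"
    and hmin: "\<forall>\<beta>\<ge>0. m (sk - \<alpha> *\<^sub>R sk) \<le> m (sk - \<beta> *\<^sub>R sk)"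
  shows "m sk - m ((1 - \<alpha>) *\<^sub>R sk) \<ge>
    (1/2) * min
      ((\<bar>dual_norm N gk - (1/2) * \<sigma> * (N sk)^2\<bar>)^2 / (1 + (3/2) * (mat_norm N H + \<sigma> * N sk)))
      ((\<bar>dual_norm N gk - (1/2) * \<sigma> * (N sk)^2\<bar>) powr (3/2) / (3 * sqrt \<sigma>))"
proof -
  define D M r where "D = dual_norm N gk" and "M = mat_norm N H" and "r = N sk"
  define \<delta> c L where "\<delta> = \<sigma> * r^2 / 2 - D" and "c = gk \<bullet> sk + \<sigma> / 2 * r^3"
    and "L = r^2 * (M + \<sigma> * r)"
  have "0 \<le> D" and M: "0 \<le> M" and "0 \<le> r"
    using dual_norm_nonneg mat_norm_nonneg is_norm_nonneg hN by (auto simp: D_def M_def r_def)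
  with hg h\<sigma> have r: "0 < r" and \<delta>: "0 < \<delta>" "\<delta> \<le> \<sigma> * r^2"
    by (auto simp: D_def r_def \<delta>_def less_le)
  have "- (gk \<bullet> sk) \<le> D * r"
    using abs_inner_le_dual_norm[OF hN, of gk sk] by (simp add: D_def r_def)
  then have c: "r * \<delta> \<le> c" by (simp add: \<delta>_def c_def power2_eq_square power3_eq_cube algebra_simps)
  have quad: "(H *v sk) \<bullet> sk \<le> M * r^2"
    using abs_quadratic_form_le_mat_norm[OF hN, of H sk] by (simp add: M_def r_def)
  have "0 < L" using r M h\<sigma> by (simp add: L_def add_nonneg_pos)
  moreover have "0 \<le> c" using c mult_pos_pos[OF r \<delta>(1)] by linarith
  ultimately obtain \<beta> where \<beta>: "0 \<le> \<beta>" "\<beta> \<le> 1"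
    and step: "min (c^2 / (2 * L)) (c / 2) \<le> \<beta> * c - \<beta>^2 / 2 * L"
    using exists_step_quadratic_decrease by blast
  have gap: "\<bar>dual_norm N gk - (1/2) * \<sigma> * (N sk)^2\<bar> = \<delta>"
    using \<delta>(1) by (simp add: D_def r_def \<delta>_def)
  have "(1/2) * min (\<delta>^2 / (1 + (3/2) * (M + \<sigma> * r))) (\<delta> powr (3/2) / (3 * sqrt \<sigma>))
      \<le> \<beta> * c - \<beta>^2 / 2 * L"
    using min_step_bound_ge_gap_bound[OF r h\<sigma> M \<delta> c, folded L_def] step by linarith
  also have "\<dots> \<le> m sk - m ((1 - \<beta>) *\<^sub>R sk)"
    using cubic_model_ray_decrease[OF hN less_imp_le[OF h\<sigma>] \<beta> quad[unfolded r_def]]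
    by (simp add: m_def c_def gk_def r_def L_def)
  also have "\<dots> \<le> m sk - m ((1 - \<alpha>) *\<^sub>R sk)"
    using hmin \<beta>(1) by (simp add: algebra_simps)
  finally show ?thesis unfolding gap M_def r_def .
qed

end
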